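(* Let $S$ be a $1$-synchronizable system. Let $\tau\in T_0(S)$ and $m_1,\dots,m_n\in\Sigma_M$ be such that $\tau\cdot !m_1\cdots !m_n\in T_n(S)$. Then $\tau\cdot !?m_1\cdots !?m_n\in T_0(S)$.
   Context: A message set $M=(\Sigma_M,N,\mathrm{src},\mathrm{dst})$: finite set of messages, $N\ge1$ peers, $\mathrm{src}(a)\neq\mathrm{dst}(a)\in\{1,\dots,N\}$. Actions $!a$ (by peer $\mathrm{src}(a)$), $?a$ (by peer $\mathrm{dst}(a)$); traces are finite action sequences; $!?a$ abbreviates $!a\cdot?a$. For a trace $\tau$, $\pi_!(\tau)$ is the sequence of sent messages; $\mathrm{buf}_{i\to j}(\tau)$ is the word $w$ (if any) with (sent on $i\to j$) $=$ (received on $i\to j$)$\cdot w$. $\tau$ is FIFO ($k$-bounded FIFO) if for all $i,j$ and prefixes $\tau'$, $\mathrm{buf}_{i\to j}(\tau')$ is defined (and has length $\le k$); synchronous if of the form $!?a_1\cdots!?a_k$. A system $S=(P_1,\dots,P_N)$: finite automata $P_i$ (all states accepting) over actions of peer $i$, with one FIFO channel per ordered pair $i\neq j$. A configuration: one control state per peer and contents $w_{i,j}$ of channels; stable if all channels empty. $!a$ ($\mathrm{src}(a)=i,\mathrm{dst}(a)=j$) moves $P_i$ and appends $a$ to $w_{i,j}$; $?a$ moves $P_j$ and removes $a$ from the head of $w_{i,j}$; $c_0$ is the initial configuration. $T_k(S)$ ($k\ge1$): $k$-bounded FIFO traces $\tau$ with $c_0\xrightarrow{\tau}c$ for some $c$;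 $T_0(S)$: synchronous such traces; $T_\omega(S)=\bigcup_kT_k(S)$. $ST_k(S)=\{\pi_!(\tau)\mid\tau\in T_k(S)\}\cup\{(\pi_!(\tau),c)\mid c_0\xrightarrow{\tau}c,\ c\text{ stable},\ \tau\in T_k(S)\}$; $S$ is $1$-synchronizable if $ST_0(S)=ST_1(S)$. *)

theory Defs
  imports Main "HOL-Library.Sublist"
begin

record 'm msgset =
  sigma  :: "'m set"
  npeers :: nat
  src    :: "'m \<Rightarrow> nat"
  dst    :: "'m \<Rightarrow> nat"

definition message_set :: "'m msgset \<Rightarrow> bool" where
  "message_set M \<longleftrightarrow> finite (sigma M) \<and> npeers M \<ge> 1 \<and>
     (\<forall>a\<in>sigma M. src M a \<noteq> dst M a \<and> src M a \<in> {1..npeers M} \<and> dst M a \<in> {1..npeers M})"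

datatype 'm action = Send 'm | Recv 'm

definition actions_of :: "'m msgset \<Rightarrow> nat \<Rightarrow> 'm action set" where
  "actions_of M i = {Send a |a. a \<in> sigma M \<and> src M a = i} \<union> {Recv a |a. a \<in> sigma M \<and> dst M a = i}"

text \<open>A finite automaton (all states accepting) over the actions of a peer.\<close>
record ('s, 'm) peer =
  states :: "'s set"
  init   :: 's
  trans  :: "('s \<times> 'm action \<times> 's) set"

definition peer_wf :: "'m msgset \<Rightarrow> nat \<Rightarrow> ('s, 'm) peer \<Rightarrow> bool" where
  "peer_wf M i P \<longleftrightarrow> finite (states P) \<and> init P \<in> states P \<and>
     trans P \<subseteq> states P \<times> actions_of M i \<times> states P"

definition system :: "'m msgset \<Rightarrow> (nat \<Rightarrow> ('s, 'm) peer) \<Rightarrow> bool" where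
  "system M S \<longleftrightarrow> message_set M \<and> (\<forall>i\<in>{1..npeers M}. peer_wf M i (S i))"

text \<open>Configuration: control state per peer, and contents of channel i \<rightarrow> j.\<close>
type_synonym ('s, 'm) config = "(nat \<Rightarrow> 's) \<times> (nat \<Rightarrow> nat \<Rightarrow> 'm list)"

definition chan_upd :: "(nat \<Rightarrow> nat \<Rightarrow> 'm list) \<Rightarrow> nat \<Rightarrow> nat \<Rightarrow> 'm list \<Rightarrow> (nat \<Rightarrow> nat \<Rightarrow> 'm list)" where
  "chan_upd w i j v = w(i := (w i)(j := v))"

inductive step :: "'m msgset \<Rightarrow> (nat \<Rightarrow> ('s, 'm) peer) \<Rightarrow> ('s, 'm) config \<Rightarrow> 'm action \<Rightarrow> ('s, 'm) config \<Rightarrow> bool"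
  for M S where
  send: "(q (src M a), Send a, p) \<in> trans (S (src M a)) \<Longrightarrow>
     step M S (q, w) (Send a)
       (q(src M a := p), chan_upd w (src M a) (dst M a) (w (src M a) (dst M a) @ [a]))"
| recv: "(q (dst M a), Recv a, p) \<in> trans (S (dst M a)) \<Longrightarrow> w (src M a) (dst M a) = a # u \<Longrightarrow>
     step M S (q, w) (Recv a)
       (q(dst M a := p), chan_upd w (src M a) (dst M a) u)"

inductive run :: "'m msgset \<Rightarrow> (nat \<Rightarrow> ('s, 'm) peer) \<Rightarrow> ('s, 'm) config \<Rightarrow> 'm action list \<Rightarrow> ('s, 'm) config \<Rightarrow> bool"
  for M S where
  run_nil: "run M S c [] c"
| run_cons: "step M S c x c' \<Longrightarrow> run M S c' t c'' \<Longrightarrow> run M S c (x # t) c''"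

definition init_config :: "(nat \<Rightarrow> ('s, 'm) peer) \<Rightarrow> ('s, 'm) config" where
  "init_config S = ((\<lambda>i. init (S i)), (\<lambda>i j. []))"

definition stable :: "('s, 'm) config \<Rightarrow> bool" where
  "stable c \<longleftrightarrow> (\<forall>i j. snd c i j = [])"

fun sends :: "'m action list \<Rightarrow> 'm list" where
  "sends [] = []"
| "sends (Send a # t) = a # sends t"
| "sends (Recv a # t) = sends t"

fun recvs :: "'m action list \<Rightarrow> 'm list" where
  "recvs [] = []"
| "recvs (Send a # t) = recvs t"
| "recvs (Recv a # t) = a # recvs t"

abbreviation send_proj :: "'m action list \<Rightarrow> 'm list" where
  "send_proj \<equiv> sends"

definition sent_on :: "'m msgset \<Rightarrow> nat \<Rightarrow> nat \<Rightarrow> 'm action list \<Rightarrow> 'm list" where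
  "sent_on M i j t = filter (\<lambda>a. src M a = i \<and> dst M a = j) (sends t)"

definition recv_on :: "'m msgset \<Rightarrow> nat \<Rightarrow> nat \<Rightarrow> 'm action list \<Rightarrow> 'm list" where
  "recv_on M i j t = filter (\<lambda>a. src M a = i \<and> dst M a = j) (recvs t)"

definition buf :: "'m msgset \<Rightarrow> nat \<Rightarrow> nat \<Rightarrow> 'm action list \<Rightarrow> 'm list option" where
  "buf M i j t = (if \<exists>w. sent_on M i j t = recv_on M i j t @ w
                  then Some (THE w. sent_on M i j t = recv_on M i j t @ w) else None)"

definition fifo_trace :: "'m msgset \<Rightarrow> 'm action list \<Rightarrow> bool" where
  "fifo_trace M t \<longleftrightarrow> (\<forall>t' i j. prefix t' t \<longrightarrow> buf M i j t' \<noteq> None)"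

definition bounded_fifo_trace :: "'m msgset \<Rightarrow> nat \<Rightarrow> 'm action list \<Rightarrow> bool" where
  "bounded_fifo_trace M k t \<longleftrightarrow>
     (\<forall>t' i j. prefix t' t \<longrightarrow> (\<exists>w. buf M i j t' = Some w \<and> length w \<le> k))"

text \<open>!?a = !a \<cdot> ?a\<close>
definition sync_seq :: "'m list \<Rightarrow> 'm action list" where
  "sync_seq as = concat (map (\<lambda>a. [Send a, Recv a]) as)"

definition synchronous :: "'m action list \<Rightarrow> bool" where
  "synchronous t \<longleftrightarrow> (\<exists>as. t = sync_seq as)"

definition T :: "'m msgset \<Rightarrow> (nat \<Rightarrow> ('s, 'm) peer) \<Rightarrow> nat \<Rightarrow> 'm action list set" where
  "T M S k = {t. (if k = 0 then synchronous t else bounded_fifo_trace M k t) \<and>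
                 (\<exists>c. run M S (init_config S) t c)}"

definition ST :: "'m msgset \<Rightarrow> (nat \<Rightarrow> ('s, 'm) peer) \<Rightarrow> nat \<Rightarrow> ('m list + ('m list \<times> ('s, 'm) config)) set" where
  "ST M S k = {Inl (send_proj t) |t. t \<in> T M S k} \<union>
              {Inr (send_proj t, c) |t c. t \<in> T M S k \<and> run M S (init_config S) t c \<and> stable c}"

definition synchronizable1 :: "'m msgset \<Rightarrow> (nat \<Rightarrow> ('s, 'm) peer) \<Rightarrow> bool" where
  "synchronizable1 M S \<longleftrightarrow> ST M S 0 = ST M S 1"

end

theory Submission
  imports Defs
begin

text \<open>Let \<tau> = !?\<sigma> and suppose \<tau> followed by the sends of ms is executable. Receive every message
  of ms immediately after its send, except the final message of each sender, which stays in its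
  channel. The resulting trace \<rho> is 1-bounded, and it is executable: the channels cause no
  trouble, and peer i sees in \<rho> exactly what it sees in \<tau> \<cdot> !?ms', where ms' drops the final
  messages of all senders other than i. If some sender differs from i, ms' is shorter than ms and
  \<tau> \<cdot> !?ms' is executable by induction; otherwise peer i only sends, and sees in \<rho> what it sees
  in \<tau> \<cdot> !ms. By 1-synchronizability the send projection \<sigma> \<cdot> ms of \<rho> is then also the send
  projection of a synchronous executable trace, which can only be \<tau> \<cdot> !?ms.\<close>

definition executable :: "'m msgset \<Rightarrow> (nat \<Rightarrow> ('s, 'm) peer) \<Rightarrow> 'm action list \<Rightarrow> bool" where
  "executable M S t \<longleftrightarrow> (\<exists>c. run M S (init_config S) t c)"

lemma sends_append [simp]: "sends (t @ u) = sends t @ sends u"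
  by (induction t rule: sends.induct) auto

lemma recvs_append [simp]: "recvs (t @ u) = recvs t @ recvs u"
  by (induction t rule: recvs.induct) auto

lemma sync_seq_append: "sync_seq (as @ bs) = sync_seq as @ sync_seq bs"
  by (simp add: sync_seq_def)

fun send_recv :: "('m \<times> bool) list \<Rightarrow> 'm action list" where
  "send_recv [] = []"
| "send_recv ((m, b) # f) = Send m # (if b then [Recv m] else []) @ send_recv f"

lemma send_recv_append [simp]: "send_recv (f @ g) = send_recv f @ send_recv g"
  by (induction f rule: send_recv.induct) auto

lemma sync_seq_eq_send_recv: "sync_seq as = send_recv (map (\<lambda>a. (a, True)) as)"
  by (induction as) (auto simp: sync_seq_def)

lemma sends_send_recv: "sends (send_recv f) = map fst f"
  by (induction f rule: send_recv.induct) auto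

lemma recvs_send_recv: "recvs (send_recv f) = map fst (filter snd f)"
  by (induction f rule: send_recv.induct) auto

lemma sends_sync_seq: "sends (sync_seq as) = as"
  by (simp add: sync_seq_eq_send_recv sends_send_recv comp_def)

section \<open>Runs as local executions plus channel behaviour\<close>

fun peer_exec :: "('s, 'm) peer \<Rightarrow> 's \<Rightarrow> 'm action list \<Rightarrow> bool" where
  "peer_exec P q [] = True"
| "peer_exec P q (x # t) = (\<exists>p. (q, x, p) \<in> trans P \<and> peer_exec P p t)"

lemma peer_exec_appendD: "peer_exec P q (t @ u) \<Longrightarrow> peer_exec P q t"
  by (induction t arbitrary: q) auto

lemma peer_exec_prefix: "prefix t u \<Longrightarrow> peer_exec P q u \<Longrightarrow> peer_exec P q t"
  by (auto simp: prefix_def dest: peer_exec_appendD)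

fun chan_exec :: "'m msgset \<Rightarrow> (nat \<Rightarrow> nat \<Rightarrow> 'm list) \<Rightarrow> 'm action list \<Rightarrow> (nat \<Rightarrow> nat \<Rightarrow> 'm list) option" where
  "chan_exec M w [] = Some w"
| "chan_exec M w (Send a # t) = chan_exec M (chan_upd w (src M a) (dst M a) (w (src M a) (dst M a) @ [a])) t"
| "chan_exec M w (Recv a # t) = (case w (src M a) (dst M a) of
       [] \<Rightarrow> None
     | b # u \<Rightarrow> if b = a then chan_exec M (chan_upd w (src M a) (dst M a) u) t else None)"

lemma chan_exec_append:
  "chan_exec M w (t @ u) = (case chan_exec M w t of None \<Rightarrow> None | Some w' \<Rightarrow> chan_exec M w' u)"
  by (induction M w t rule: chan_exec.induct) (auto split: list.split option.split)

lemma chan_exec_sends: "chan_exec M w (map Send ms) \<noteq> None"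
  by (induction ms arbitrary: w) auto

lemma chan_upd_apply: "chan_upd w i j v k l = (if k = i \<and> l = j then v else w k l)"
  by (simp add: chan_upd_def)

lemma chan_upd_empty: "w i j = [] \<Longrightarrow> chan_upd (chan_upd w i j v) i j [] = w"
  by (auto simp: chan_upd_def fun_eq_iff)

fun actor :: "'m msgset \<Rightarrow> 'm action \<Rightarrow> nat" where
  "actor M (Send a) = src M a"
| "actor M (Recv a) = dst M a"

definition proj :: "'m msgset \<Rightarrow> nat \<Rightarrow> 'm action list \<Rightarrow> 'm action list" where
  "proj M i t = filter (\<lambda>x. actor M x = i) t"

lemma proj_append [simp]: "proj M i (t @ u) = proj M i t @ proj M i u"
  by (simp add: proj_def)

lemma proj_Cons: "proj M i (x # t) = (if actor M x = i then x # proj M i t else proj M i t)"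
  by (simp add: proj_def)

lemma proj_map_Send: "proj M i (map Send ms) = map Send (filter (\<lambda>m. src M m = i) ms)"
  by (induction ms) (auto simp: proj_def)

lemma run_peer_exec:
  "run M S c t c' \<Longrightarrow> peer_exec (S i) (fst c i) (proj M i t) \<and> chan_exec M (snd c) t \<noteq> None"
proof (induction rule: run.induct)
  case (run_nil c)
  then show ?case by (simp add: proj_def)
next
  case (run_cons c x c' t c'')
  from run_cons.hyps(1) show ?case
    by (cases rule: step.cases) (use run_cons.IH in \<open>auto simp: proj_Cons\<close>)
qed

lemma peer_exec_run:
  "\<forall>i. peer_exec (S i) (q i) (proj M i t) \<Longrightarrow> chan_exec M w t \<noteq> None \<Longrightarrow> \<exists>c. run M S (q, w) t c"
proof (induction t arbitrary: q w)
  case Nil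
  then show ?case by (auto intro: run.intros)
next
  case (Cons x t)
  obtain p where p: "(q (actor M x), x, p) \<in> trans (S (actor M x))"
    and p_exec: "peer_exec (S (actor M x)) p (proj M (actor M x) t)"
    using Cons.prems(1)[rule_format, of "actor M x"] by (auto simp: proj_Cons)
  have peers: "\<forall>j. peer_exec (S j) ((q(actor M x := p)) j) (proj M j t)"
  proof
    fix j
    show "peer_exec (S j) ((q(actor M x := p)) j) (proj M j t)"
      using Cons.prems(1)[rule_format, of j] p_exec by (cases "j = actor M x") (auto simp: proj_Cons)
  qed
  show ?case
  proof (cases x)
    case (Send a)
    let ?w = "chan_upd w (src M a) (dst M a) (w (src M a) (dst M a) @ [a])"
    have "\<exists>c. run M S (q(src M a := p), ?w) t c"
      by (rule Cons.IH) (use peers Cons.prems(2) Send in simp_all)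
    then obtain c where "run M S (q(src M a := p), ?w) t c" ..
    moreover have "step M S (q, w) (Send a) (q(src M a := p), ?w)"
      using p Send by (auto intro: step.send)
    ultimately show ?thesis using Send by (blast intro: run_cons)
  next
    case (Recv a)
    obtain u where u: "w (src M a) (dst M a) = a # u"
      and u_exec: "chan_exec M (chan_upd w (src M a) (dst M a) u) t \<noteq> None"
      using Cons.prems(2) Recv by (auto split: list.splits if_splits)
    have "\<exists>c. run M S (q(dst M a := p), chan_upd w (src M a) (dst M a) u) t c"
      by (rule Cons.IH) (use peers u_exec Recv in simp_all)
    then obtain c where "run M S (q(dst M a := p), chan_upd w (src M a) (dst M a) u) t c" ..
    moreover have "step M S (q, w) (Recv a) (q(dst M a := p), chan_upd w (src M a) (dst M a) u)"
      using p u Recv by (auto intro: step.recv)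
    ultimately show ?thesis using Recv by (blast intro: run_cons)
  qed
qed

lemma executable_iff:
  "executable M S t \<longleftrightarrow>
     (\<forall>i. peer_exec (S i) (init (S i)) (proj M i t)) \<and> chan_exec M (\<lambda>i j. []) t \<noteq> None"
  using run_peer_exec[of M S "init_config S" t] peer_exec_run[of S "\<lambda>i. init (S i)" M t]
  by (fastforce simp: executable_def init_config_def)

lemma executable_fewer_sends:
  assumes exec: "executable M S (t @ map Send ms)"
    and prefixes: "\<And>j. prefix (filter (\<lambda>m. src M m = j) ms') (filter (\<lambda>m. src M m = j) ms)"
  shows "executable M S (t @ map Send ms')"
  unfolding executable_iff
proof
  show "\<forall>j. peer_exec (S j) (init (S j)) (proj M j (t @ map Send ms'))"
  proof
    fix j
    have "peer_exec (S j) (init (S j)) (proj M j t @ map Send (filter (\<lambda>m. src M m = j) ms))"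
      using exec by (simp add: executable_iff proj_map_Send)
    then show "peer_exec (S j) (init (S j)) (proj M j (t @ map Send ms'))"
      by (rule peer_exec_prefix[rotated]) (simp add: proj_map_Send map_mono_prefix prefixes)
  qed
  obtain w where "chan_exec M (\<lambda>i j. []) t = Some w"
    using exec by (auto simp: executable_iff chan_exec_append split: option.splits)
  then show "chan_exec M (\<lambda>i j. []) (t @ map Send ms') \<noteq> None"
    by (simp add: chan_exec_append chan_exec_sends)
qed

section \<open>Traces in which only the last message of a channel may stay pending\<close>

fun pending_last :: "'m msgset \<Rightarrow> ('m \<times> bool) list \<Rightarrow> bool" where
  "pending_last M [] = True"
| "pending_last M ((m, b) # f) \<longleftrightarrow> pending_last M f \<and>
     (\<not> b \<longrightarrow> (\<forall>m'\<in>fst ` set f. (src M m', dst M m') \<noteq> (src M m, dst M m)))"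

lemma pending_last_append_sync [simp]:
  "pending_last M (map (\<lambda>a. (a, True)) as @ f) = pending_last M f"
  by (induction as) auto

lemma sent_on_pending_last:
  assumes "pending_last M f"
  shows "\<exists>w. sent_on M i j (send_recv f) = recv_on M i j (send_recv f) @ w \<and> length w \<le> 1"
  using assms
proof (induction f)
  case Nil
  then show ?case by (simp add: sent_on_def recv_on_def)
next
  case (Cons p f)
  obtain m b where p: "p = (m, b)" by fastforce
  let ?ch = "\<lambda>a. src M a = i \<and> dst M a = j"
  obtain w where w: "filter ?ch (map fst f) = filter ?ch (map fst (filter snd f)) @ w" "length w \<le> 1"
    using Cons p by (auto simp: sent_on_def recv_on_def sends_send_recv recvs_send_recv)
  show ?case
  proof (cases "\<not> b \<and> ?ch m")
    case True
    then have "\<forall>m'\<in>set (map fst f). \<not> ?ch m'"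
      using Cons.prems p by auto
    then have "filter ?ch (map fst f) = []" "filter ?ch (map fst (filter snd f)) = []"
      by (auto simp: filter_empty_conv)
    then show ?thesis
      using True p by (auto simp: sent_on_def recv_on_def sends_send_recv recvs_send_recv)
  next
    case False
    then show ?thesis
      using w p by (auto simp: sent_on_def recv_on_def sends_send_recv recvs_send_recv)
  qed
qed

lemma prefix_sends: "prefix t u \<Longrightarrow> prefix (sends t) (sends u)"
  by (auto simp: prefix_def)

lemma prefix_send_recv_pending_last:
  assumes "prefix t (send_recv f)" and "pending_last M f"
  shows "\<exists>g. t = send_recv g \<and> pending_last M g"
  using assms
proof (induction f arbitrary: t)
  case Nil
  then show ?case by (intro exI[of _ "[]"]) auto
next
  case (Cons p f)
  obtain m b where p: "p = (m, b)" by fastforce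
  let ?blk = "Send m # (if b then [Recv m] else [])"
  have "send_recv (p # f) = ?blk @ send_recv f"
    using p by simp
  then have "prefix t ?blk \<or> (\<exists>u. t = ?blk @ u \<and> prefix u (send_recv f))"
    using Cons.prems(1) by (simp only: prefix_append)
  then show ?case
  proof
    assume "prefix t ?blk"
    then have "t = [] \<or> t = [Send m] \<or> (b \<and> t = [Send m, Recv m])"
      by (cases b) (auto simp: prefix_Cons)
    then show ?thesis
      by (elim disjE) (rule exI[of _ "[]"] exI[of _ "[(m, False)]"] exI[of _ "[(m, True)]"]; simp)+
  next
    assume "\<exists>u. t = ?blk @ u \<and> prefix u (send_recv f)"
    then obtain u where u: "t = ?blk @ u" "prefix u (send_recv f)" by blast
    obtain g where g: "u = send_recv g" "pending_last M g"
      using Cons.IH u(2) Cons.prems(2) p by auto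
    have "fst ` set g \<subseteq> fst ` set f"
      using set_mono_prefix[OF prefix_sends[OF u(2)]] g(1) by (simp add: sends_send_recv)
    moreover have "\<forall>m'\<in>fst ` set f. (src M m', dst M m') \<noteq> (src M m, dst M m)" if "\<not> b"
      using Cons.prems(2) p that by auto
    ultimately have "\<forall>m'\<in>fst ` set g. (src M m', dst M m') \<noteq> (src M m, dst M m)" if "\<not> b"
      using that by blast
    then have "pending_last M ((m, b) # g)"
      using g(2) by simp
    then show ?thesis using u g by (intro exI[of _ "(m, b) # g"]) auto
  qed
qed

lemma bounded_fifo_pending_last:
  assumes "pending_last M f"
  shows "bounded_fifo_trace M 1 (send_recv f)"
  unfolding bounded_fifo_trace_def
proof (intro allI impI)
  fix t i j
  assume "prefix t (send_recv f)"
  then obtain g where "t = send_recv g" "pending_last M g"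
    using prefix_send_recv_pending_last assms by blast
  then show "\<exists>w. buf M i j t = Some w \<and> length w \<le> 1"
    using sent_on_pending_last[of M g i j] by (auto simp: buf_def)
qed

lemma chan_exec_pending_last:
  "pending_last M f \<Longrightarrow> \<forall>(m, b)\<in>set f. b \<longrightarrow> w (src M m) (dst M m) = [] \<Longrightarrow>
     chan_exec M w (send_recv f) \<noteq> None"
proof (induction f arbitrary: w)
  case Nil
  then show ?case by simp
next
  case (Cons p f)
  obtain m b where p: "p = (m, b)" by fastforce
  show ?case
  proof (cases b)
    case True
    then have "w (src M m) (dst M m) = []" "chan_exec M w (send_recv f) \<noteq> None"
      using Cons p by auto
    then show ?thesis using p True by (simp add: chan_upd_apply chan_upd_empty)
  next
    case False
    let ?w = "chan_upd w (src M m) (dst M m) (w (src M m) (dst M m) @ [m])"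
    have "\<forall>(m', b')\<in>set f. b' \<longrightarrow> ?w (src M m') (dst M m') = []"
      using Cons.prems p False by (fastforce simp: chan_upd_apply)
    then have "chan_exec M ?w (send_recv f) \<noteq> None" using Cons.IH Cons.prems p by auto
    then show ?thesis using p False by simp
  qed
qed

fun mark_nonfinal :: "'m msgset \<Rightarrow> 'm list \<Rightarrow> ('m \<times> bool) list" where
  "mark_nonfinal M [] = []"
| "mark_nonfinal M (m # ms) = (m, \<exists>m'\<in>set ms. src M m' = src M m) # mark_nonfinal M ms"

fun drop_final_except :: "'m msgset \<Rightarrow> nat \<Rightarrow> 'm list \<Rightarrow> 'm list" where
  "drop_final_except M i [] = []"
| "drop_final_except M i (m # ms) =
     (if (\<forall>m'\<in>set ms. src M m' \<noteq> src M m) \<and> src M m \<noteq> i then drop_final_except M i ms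
      else m # drop_final_except M i ms)"

lemma map_fst_mark_nonfinal [simp]: "map fst (mark_nonfinal M ms) = ms"
  by (induction ms) auto

lemma fst_set_mark_nonfinal [simp]: "fst ` set (mark_nonfinal M ms) = set ms"
  by (metis list.set_map map_fst_mark_nonfinal)

lemma pending_last_mark_nonfinal: "pending_last M (mark_nonfinal M ms)"
  by (induction ms) auto

lemma set_drop_final_except: "set (drop_final_except M i ms) \<subseteq> set ms"
  by (induction ms) auto

lemma length_drop_final_except_less:
  "\<exists>m\<in>set ms. src M m \<noteq> i \<Longrightarrow> length (drop_final_except M i ms) < length ms"
proof (induction ms)
  case (Cons m ms)
  have shorter: "length (drop_final_except M i ms) \<le> length ms" for ms
    by (induction ms) auto
  show ?case
  proof (cases "\<exists>m\<in>set ms. src M m \<noteq> i")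
    case True
    then show ?thesis using Cons.IH by auto
  next
    case False
    then have "drop_final_except M i (m # ms) = drop_final_except M i ms"
      using Cons.prems by auto
    then show ?thesis using shorter[of ms] by simp
  qed
qed simp

lemma prefix_filter_drop_final_except:
  "prefix (filter (\<lambda>m. src M m = j) (drop_final_except M i ms)) (filter (\<lambda>m. src M m = j) ms)"
proof (induction ms)
  case (Cons m ms)
  show ?case
  proof (cases "(\<forall>m'\<in>set ms. src M m' \<noteq> src M m) \<and> src M m \<noteq> i \<and> src M m = j")
    case True
    then have "filter (\<lambda>m. src M m = j) (drop_final_except M i ms) = []"
      using set_drop_final_except[of M i ms] by (auto simp: filter_empty_conv)
    then show ?thesis using True by simp
  next
    case False
    then show ?thesis using Cons.IH by auto
  qed
qed simp

lemma proj_drop_final_except: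
  "\<forall>m\<in>set ms. src M m \<noteq> dst M m \<Longrightarrow>
     proj M i (sync_seq (drop_final_except M i ms)) = proj M i (send_recv (mark_nonfinal M ms))"
  by (induction ms) (auto simp: proj_def sync_seq_def)

lemma proj_send_recv_single_sender:
  "\<forall>m\<in>fst ` set f. src M m = i \<and> src M m \<noteq> dst M m \<Longrightarrow> proj M i (send_recv f) = map Send (map fst f)"
proof (induction f rule: send_recv.induct)
  case (2 m b f)
  have "proj M i (send_recv f) = map Send (map fst f)"
    using "2.prems" by (intro "2.IH") auto
  then show ?case
    using "2.prems" by (simp add: proj_def)
qed (simp add: proj_def)

lemma executable_sync_seq_sends:
  assumes "synchronizable1 M S" and "executable M S \<rho>" and "bounded_fifo_trace M 1 \<rho>"
  shows "executable M S (sync_seq (sends \<rho>))"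
proof -
  have "Inl (sends \<rho>) \<in> ST M S 1"
    using assms(2,3) by (auto simp: ST_def T_def executable_def)
  then have "Inl (sends \<rho>) \<in> ST M S 0"
    using assms(1) by (simp add: synchronizable1_def)
  then obtain as where "sends \<rho> = sends (sync_seq as)" "executable M S (sync_seq as)"
    by (auto simp: ST_def T_def synchronous_def executable_def)
  then show ?thesis by (simp add: sends_sync_seq)
qed

lemma executable_sync_after_sends:
  assumes sync: "synchronizable1 M S"
    and "\<forall>m\<in>set ms. src M m \<noteq> dst M m"
    and "executable M S (sync_seq \<sigma> @ map Send ms)"
  shows "executable M S (sync_seq \<sigma> @ sync_seq ms)"
  using assms(2,3)
proof (induction ms rule: length_induct)
  case (1 ms)
  note no_loops = "1.prems"(1) and exec = "1.prems"(2)
  define f where "f = map (\<lambda>a. (a, True)) \<sigma> @ mark_nonfinal M ms"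
  have pending: "pending_last M f"
    by (simp add: f_def pending_last_mark_nonfinal)
  have "peer_exec (S i) (init (S i)) (proj M i (send_recv f))" for i
  proof (cases "\<forall>m\<in>set ms. src M m = i")
    case True
    then have "proj M i (send_recv (mark_nonfinal M ms)) = proj M i (map Send ms)"
      using no_loops proj_send_recv_single_sender[of "mark_nonfinal M ms" M i]
      by (simp add: proj_map_Send)
    then show ?thesis
      using exec by (simp add: executable_iff f_def sync_seq_eq_send_recv)
  next
    case False
    define ms' where "ms' = drop_final_except M i ms"
    have "executable M S (sync_seq \<sigma> @ map Send ms')"
      unfolding ms'_def by (rule executable_fewer_sends[OF exec prefix_filter_drop_final_except])
    moreover have "length ms' < length ms"
      unfolding ms'_def by (rule length_drop_final_except_less) (use False in blast)
    moreover have "\<forall>m\<in>set ms'. src M m \<noteq> dst M m"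
      using no_loops set_drop_final_except by (fastforce simp: ms'_def)
    ultimately have "executable M S (sync_seq \<sigma> @ sync_seq ms')"
      using "1.IH" by blast
    then have "peer_exec (S i) (init (S i)) (proj M i (sync_seq \<sigma> @ sync_seq ms'))"
      by (simp add: executable_iff)
    moreover have "proj M i (sync_seq \<sigma> @ sync_seq ms') = proj M i (send_recv f)"
      using proj_drop_final_except[OF no_loops, of i]
      by (simp add: f_def ms'_def sync_seq_eq_send_recv)
    ultimately show ?thesis
      by simp
  qed
  moreover have "chan_exec M (\<lambda>i j. []) (send_recv f) \<noteq> None"
    using chan_exec_pending_last[OF pending] by simp
  ultimately have "executable M S (send_recv f)"
    by (simp add: executable_iff)
  then have "executable M S (sync_seq (sends (send_recv f)))"
    using executable_sync_seq_sends[OF sync _ bounded_fifo_pending_last[OF pending]] by blast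
  then show ?case
    by (simp add: sends_send_recv f_def comp_def sync_seq_append)
qed

theorem lemma4p7:
  fixes M :: "'m msgset" and S :: "nat \<Rightarrow> ('s, 'm) peer"
    and \<tau> :: "'m action list" and ms :: "'m list" and n :: nat
  assumes "system M S"
    and "synchronizable1 M S"
    and "\<tau> \<in> T M S 0"
    and "set ms \<subseteq> sigma M" and "length ms = n"
    and "\<tau> @ map Send ms \<in> T M S n"
  shows "\<tau> @ sync_seq ms \<in> T M S 0"
proof -
  obtain \<sigma> where \<tau>: "\<tau> = sync_seq \<sigma>"
    using assms(3) by (auto simp: T_def synchronous_def)
  have "\<forall>m\<in>set ms. src M m \<noteq> dst M m"
    using assms(1,4) by (auto simp: system_def message_set_def)
  moreover have "executable M S (sync_seq \<sigma> @ map Send ms)"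
    using assms(6) unfolding T_def executable_def \<tau> by blast
  ultimately have "executable M S (sync_seq \<sigma> @ sync_seq ms)"
    using executable_sync_after_sends[OF assms(2)] by blast
  moreover have "synchronous (sync_seq \<sigma> @ sync_seq ms)"
    by (metis sync_seq_append synchronous_def)
  ultimately show ?thesis
    by (simp add: T_def executable_def \<tau>)
qed

end
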